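(* Let $X_0=(y_0,U_0,H_0,r_0,V_0)\in\mathcal{F}_i^\alpha$ and let $X(t)$ be the $\alpha$-dissipative solution with initial data $X_0$. Let $c>0$ be such that $c\le y_{0,\xi}(\xi)+H_{0,\xi}(\xi)$ for a.e. $\xi\in\mathbb{R}$. Then for every $t\ge0$, $$\mathrm{m}\big(\{\xi\in\mathbb{R}:\tau(\xi)\le t\}\big)\le\frac{1+\frac14t^2}{c}\|H_0\|_\infty,$$ where $\mathrm{m}$ denotes Lebesgue measure.
   Context: Fix $\alpha\in W^{1,\infty}(\mathbb{R})$ with either $0\le\alpha(x)<1$ for all $x\in\mathbb{R}$, or $\alpha(x)=1$ for all $x\in\mathbb{R}$. $E_1=\{f\in L^\infty(\mathbb{R}): f'\in L^2(\mathbb{R}),\ \lim_{x\to-\infty}f(x)=0\}$, $E_2=\{f\in L^\infty(\mathbb{R}): f'\in L^2(\mathbb{R})\}$, normed by $\|f\|_\infty+\|f'\|_2$; $B=E_2\times E_2\times E_1\times L^2(\mathbb{R})\times E_1$. $\mathcal{F}^\alpha$ is the set of $X=(y,U,H,r,V)$ with $(y-\mathrm{id},U,H,r,V)\in B$ such that: (i) $y-\mathrm{id},U,H,V\in W^{1,\infty}$, $r\in L^\infty$; (ii) $y_\xi\ge0$, $H_\xi\ge0$ and $y_\xi+H_\xi>c'$ a.e. for some constant $c'>0$; (iii) $y_\xi V_\xi=U_\xi^2+r^2$ a.e.; (iv) $0\le V_\xi\le H_\xi$ a.e.; (v) if $0\le\alpha<1$, there is $\kappa:\mathbb{R}\to(0,1]$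 with $V_\xi=\kappa(y)H_\xi$ a.e. and $\kappa(y(\xi))=1$ whenever $U_\xi(\xi)<0$ or $r(\xi)\ne0$; (vi) if $\alpha\equiv1$, a.e. $y_\xi=0\Rightarrow V_\xi=0$ and $y_\xi>0\Rightarrow V_\xi=H_\xi$. $\mathcal{F}_i^\alpha=\{X\in\mathcal{F}^\alpha:V=H\}$. For $X_0\in\mathcal{F}_i^\alpha$ the breaking time is $\tau(\xi)=0$ if $y_{0,\xi}(\xi)=0$, $\tau(\xi)=-2U_{0,\xi}(\xi)/H_{0,\xi}(\xi)$ if $r_0(\xi)=0$ and $U_{0,\xi}(\xi)<0$, and $\tau(\xi)=\infty$ otherwise. The $\alpha$-dissipative solution with data $X_0$ is the unique $X(t)=(y,U,H,r,V)(t)$, $X(0)=X_0$, solving $y_t=U$, $U_t=\frac12V-\frac14\lim_{\xi\to\infty}V$, $H_t=0$, $r_t=0$, with $V(\xi,t)=\int_{-\infty}^\xi H_{0,\xi}(\eta)(1-\mathbf{1}_{\{t\ge\tau(\eta)\}}\alpha(y(\eta,\tau(\eta))))d\eta$. *)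

theory Defs
  imports "HOL-Analysis.Analysis"
begin

text \<open>Functions on the real line are represented pointwise; weak derivatives are
given explicitly as functions that are a.e. derivatives of Lipschitz functions
(this characterises W^{1,infinity}).\<close>

definition bdd_fun :: "(real \<Rightarrow> real) \<Rightarrow> bool" where
  "bdd_fun f \<longleftrightarrow> (\<exists>M. \<forall>x. \<bar>f x\<bar> \<le> M)"

definition Linf :: "(real \<Rightarrow> real) \<Rightarrow> bool" where
  "Linf f \<longleftrightarrow> f \<in> borel_measurable lebesgue \<and> (\<exists>M. AE x in lebesgue. \<bar>f x\<bar> \<le> M)"

definition L2 :: "(real \<Rightarrow> real) \<Rightarrow> bool" where
  "L2 f \<longleftrightarrow> f \<in> borel_measurable lebesgue \<and> integrable lebesgue (\<lambda>x. (f x)\<^sup>2)"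

definition lip_with_deriv :: "(real \<Rightarrow> real) \<Rightarrow> (real \<Rightarrow> real) \<Rightarrow> bool" where
  "lip_with_deriv f f' \<longleftrightarrow> (\<exists>L. L-lipschitz_on UNIV f) \<and>
     (AE x in lebesgue. (f has_real_derivative f' x) (at x))"

definition in_F_alpha ::
  "(real \<Rightarrow> real) \<Rightarrow> (real \<Rightarrow> real) \<Rightarrow> (real \<Rightarrow> real) \<Rightarrow> (real \<Rightarrow> real) \<Rightarrow> (real \<Rightarrow> real)
   \<Rightarrow> (real \<Rightarrow> real) \<Rightarrow> (real \<Rightarrow> real) \<Rightarrow> (real \<Rightarrow> real) \<Rightarrow> (real \<Rightarrow> real) \<Rightarrow> (real \<Rightarrow> real) \<Rightarrow> bool" where
  "in_F_alpha \<alpha> y U H r V y' U' H' V' \<longleftrightarrow>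
     \<comment> \<open>(y - id, U, H, r, V) \<in> B and (i)\<close>
     bdd_fun (\<lambda>x. y x - x) \<and> bdd_fun U \<and> bdd_fun H \<and> bdd_fun V \<and>
     lip_with_deriv y y' \<and> lip_with_deriv U U' \<and> lip_with_deriv H H' \<and> lip_with_deriv V V' \<and>
     L2 (\<lambda>x. y' x - 1) \<and> L2 U' \<and> L2 H' \<and> L2 V' \<and> L2 r \<and> Linf r \<and>
     (H \<longlongrightarrow> 0) at_bot \<and> (V \<longlongrightarrow> 0) at_bot \<and>
     \<comment> \<open>(ii)\<close>
     (AE x in lebesgue. y' x \<ge> 0 \<and> H' x \<ge> 0) \<and>
     (\<exists>c'>0. AE x in lebesgue. y' x + H' x > c') \<and>
     \<comment> \<open>(iii)\<close>
     (AE x in lebesgue. y' x * V' x = (U' x)\<^sup>2 + (r x)\<^sup>2) \<and>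
     \<comment> \<open>(iv)\<close>
     (AE x in lebesgue. 0 \<le> V' x \<and> V' x \<le> H' x) \<and>
     \<comment> \<open>(v)\<close>
     ((\<forall>x. 0 \<le> \<alpha> x \<and> \<alpha> x < 1) \<longrightarrow>
        (\<exists>\<kappa>::real \<Rightarrow> real. (\<forall>s. 0 < \<kappa> s \<and> \<kappa> s \<le> 1) \<and>
           (AE x in lebesgue. V' x = \<kappa> (y x) * H' x \<and>
              ((U' x < 0 \<or> r x \<noteq> 0) \<longrightarrow> \<kappa> (y x) = 1)))) \<and>
     \<comment> \<open>(vi)\<close>
     ((\<forall>x. \<alpha> x = 1) \<longrightarrow>
        (AE x in lebesgue. (y' x = 0 \<longrightarrow> V' x = 0) \<and> (y' x > 0 \<longrightarrow> V' x = H' x)))"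

definition breaking_time ::
  "(real \<Rightarrow> real) \<Rightarrow> (real \<Rightarrow> real) \<Rightarrow> (real \<Rightarrow> real) \<Rightarrow> (real \<Rightarrow> real) \<Rightarrow> real \<Rightarrow> ereal" where
  "breaking_time y' U' H' r \<xi> =
     (if y' \<xi> = 0 then 0
      else if r \<xi> = 0 \<and> U' \<xi> < 0 then ereal (- 2 * U' \<xi> / H' \<xi>)
      else \<infinity>)"

end

theory Submission
  imports Defs
begin

text \<open>Where the breaking time is at most \<open>t\<close>, the relation \<open>y\<^sub>0' H\<^sub>0' = U\<^sub>0'\<^sup>2 + r\<^sub>0\<^sup>2\<close>
forces \<open>y\<^sub>0' \<le> t\<^sup>2/4 \<cdot> H\<^sub>0'\<close>, so \<open>c \<le> y\<^sub>0' + H\<^sub>0' \<le> (1 + t\<^sup>2/4) H\<^sub>0'\<close> there. Since \<open>H\<^sub>0\<close> is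
Lipschitz, nondecreasing and vanishes at \<open>-\<infinity>\<close>, integrating \<open>H\<^sub>0'\<close> over that set gives at
most \<open>sup H\<^sub>0\<close>, which yields the measure bound.\<close>

lemma difference_quotient_tendsto:
  fixes F :: "real \<Rightarrow> real"
  assumes "(F has_real_derivative D) (at x within S)" "\<And>k. x + 1 / real (Suc k) \<in> S"
  shows "(\<lambda>k. (F (x + 1 / real (Suc k)) - F x) * real (Suc k)) \<longlonglongrightarrow> D"
proof -
  have lim: "((\<lambda>y. (F y - F x) / (y - x)) \<longlongrightarrow> D) (at x within S)"
    using assms(1) has_field_derivative_iff by blast
  have "(\<lambda>k. x + 1 / real (Suc k)) \<longlonglongrightarrow> x + 0"
    by (intro tendsto_add tendsto_const LIMSEQ_Suc[OF lim_inverse_n'])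
  then have "filterlim (\<lambda>k. x + 1 / real (Suc k)) (at x within S) sequentially"
    unfolding filterlim_at using assms(2) by auto
  from filterlim_compose[OF lim this]
  show ?thesis by (simp add: o_def field_simps)
qed

lemma interval_average_tendsto:
  fixes f :: "real \<Rightarrow> real"
  assumes "continuous_on UNIV f"
  shows "(\<lambda>k. integral {x..x + 1 / real (Suc k)} f * real (Suc k)) \<longlonglongrightarrow> f x"
proof -
  have "((\<lambda>y. integral {x..y} f) has_real_derivative f x) (at x within {x..x + 1})"
    by (rule integral_has_real_derivative) (auto intro: continuous_on_subset[OF assms])
  from difference_quotient_tendsto[OF this] show ?thesis by simp
qed

lemma integral_shift_difference:
  fixes f :: "real \<Rightarrow> real"
  assumes f: "continuous_on UNIV f" and "a \<le> b" "0 \<le> h"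
  shows "integral {a..b} (\<lambda>x. f (x + h) - f x) = integral {b..b + h} f - integral {a..a + h} f"
proof -
  have int: "f integrable_on {u..v}" for u v
    by (rule integrable_continuous_interval) (auto intro: continuous_on_subset[OF f])
  have "integral {a..b} (\<lambda>x. f (x + h)) = integral {a + h..b + h} f"
    using integral_shift_Icc_real[of a b f h] by (simp add: o_def add.commute)
  moreover have "integral {a..b} f + integral {b..b + h} f = integral {a..b + h} f"
    by (rule Henstock_Kurzweil_Integration.integral_combine) (use assms int in auto)
  moreover have "integral {a..a + h} f + integral {a + h..b + h} f = integral {a..b + h} f"
    by (rule Henstock_Kurzweil_Integration.integral_combine) (use assms int in auto)
  moreover have "(\<lambda>x. f (x + h)) integrable_on {a..b}"
    by (rule integrable_continuous_interval)
      (auto intro!: continuous_on_compose2[OF f] continuous_intros)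
  ultimately show ?thesis using int by (simp add: integral_diff)
qed

text \<open>The difference quotients are bounded by the Lipschitz constant, so dominated convergence
lets us pass to the limit under the integral.\<close>
lemma lipschitz_has_integral_derivative:
  fixes f f' :: "real \<Rightarrow> real"
  assumes L: "L-lipschitz_on UNIV f"
    and deriv: "AE x in lebesgue. (f has_real_derivative f' x) (at x)"
    and "a \<le> b"
  shows "(f' has_integral (f b - f a)) {a..b}"
proof -
  obtain N where N: "{x \<in> space lebesgue. \<not> (f has_real_derivative f' x) (at x)} \<subseteq> N"
    "N \<in> null_sets lebesgue"
    using deriv by (auto elim!: AE_E simp: null_sets_def)
  have negN: "negligible N" using N(2) by (simp add: negligible_iff_null_sets)
  define T where "T = {a..b} - N"
  have spike: "negligible ({a..b} - T \<union> (T - {a..b}))"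
    unfolding T_def by (rule negligible_subset[OF negN]) auto
  define g where "g k x = (f (x + 1 / real (Suc k)) - f x) * real (Suc k)" for k x
  have cont: "continuous_on UNIV f" using L lipschitz_on_continuous_on by blast
  have g_int: "g k integrable_on T" for k
  proof -
    have "continuous_on {a..b} (g k)"
      unfolding g_def by (intro continuous_intros continuous_on_compose2[OF cont]) auto
    then show ?thesis
      using integrable_spike_set_eq[OF spike] integrable_continuous_interval by blast
  qed
  have g_bound: "norm (g k x) \<le> L" for k x
  proof -
    have "\<bar>f (x + 1 / real (Suc k)) - f x\<bar> \<le> L / real (Suc k)"
      using lipschitz_onD[OF L, of "x + 1 / real (Suc k)" x] by (simp add: dist_real_def)
    then have "\<bar>f (x + 1 / real (Suc k)) - f x\<bar> * real (Suc k) \<le> L"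
      by (simp add: field_simps)
    then show ?thesis unfolding g_def by (simp add: abs_mult)
  qed
  have g_lim: "(\<lambda>k. g k x) \<longlonglongrightarrow> f' x" if "x \<in> T" for x
    using that N(1) unfolding T_def g_def by (intro difference_quotient_tendsto) auto
  have "(\<lambda>x. L) integrable_on T"
    using integrable_spike_set_eq[OF spike] integrable_const_ivl by blast
  from dominated_convergence[of g T "\<lambda>x. L" f', OF g_int this g_bound g_lim]
  have f'_int: "f' integrable_on T" and lim: "(\<lambda>k. integral T (g k)) \<longlonglongrightarrow> integral T f'"
    by auto
  have "integral T (g k) = integral {b..b + 1 / real (Suc k)} f * real (Suc k)
                         - integral {a..a + 1 / real (Suc k)} f * real (Suc k)" for k
  proof -
    have "integral T (g k) = integral {a..b} (g k)"
      by (rule integral_spike_set; rule negligible_subset[OF negN]) (auto simp: T_def)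
    also have "\<dots> = integral {a..b} (\<lambda>x. f (x + 1 / real (Suc k)) - f x) * real (Suc k)"
      unfolding g_def by (rule integral_mult_left)
    also have "\<dots> = (integral {b..b + 1 / real (Suc k)} f - integral {a..a + 1 / real (Suc k)} f)
                      * real (Suc k)"
      by (simp add: integral_shift_difference[OF cont \<open>a \<le> b\<close>])
    finally show ?thesis by (simp add: left_diff_distrib)
  qed
  moreover have "(\<lambda>k. integral {b..b + 1 / real (Suc k)} f * real (Suc k)
                     - integral {a..a + 1 / real (Suc k)} f * real (Suc k)) \<longlonglongrightarrow> f b - f a"
    by (intro tendsto_diff interval_average_tendsto cont)
  ultimately have "integral T f' = f b - f a"
    using lim LIMSEQ_unique by auto
  with f'_int have "(f' has_integral (f b - f a)) T"
    by (metis has_integral_integral)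
  moreover have "(f' has_integral (f b - f a)) T \<longleftrightarrow> (f' has_integral (f b - f a)) {a..b}"
    by (rule has_integral_spike_set_eq; rule negligible_subset[OF negN]) (auto simp: T_def)
  ultimately show ?thesis by blast
qed

lemma breaking_time_le_imp_deriv_lower_bound:
  fixes y' U' H' r :: "real \<Rightarrow> real" and c t :: real
  assumes "0 \<le> y' \<xi>" "0 \<le> H' \<xi>" "y' \<xi> * H' \<xi> = (U' \<xi>)\<^sup>2 + (r \<xi>)\<^sup>2"
    and "c \<le> y' \<xi> + H' \<xi>" "0 \<le> t"
    and "breaking_time y' U' H' r \<xi> \<le> ereal t"
  shows "c \<le> (1 + t\<^sup>2 / 4) * H' \<xi>"
proof (cases "y' \<xi> = 0")
  case True
  have "H' \<xi> \<le> (1 + t\<^sup>2 / 4) * H' \<xi>"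
    using assms(2) by (simp add: mult_le_cancel_right1)
  then show ?thesis using True assms(4) by simp
next
  case False
  then have r: "r \<xi> = 0" and U: "U' \<xi> < 0" and le: "- 2 * U' \<xi> / H' \<xi> \<le> t"
    using assms(6) by (auto simp: breaking_time_def split: if_splits)
  have "H' \<xi> \<noteq> 0"
    using assms(3) r U by auto
  then have H: "0 < H' \<xi>" using assms(2) by simp
  then have "- 2 * U' \<xi> / H' \<xi> * H' \<xi> \<le> t * H' \<xi>"
    using le by (intro mult_right_mono) auto
  then have "- U' \<xi> \<le> t * H' \<xi> / 2"
    using H by simp
  then have "(U' \<xi>)\<^sup>2 \<le> (t * H' \<xi> / 2)\<^sup>2"
    using U power_mono[of "- U' \<xi>" "t * H' \<xi> / 2" 2] by simp
  then have "y' \<xi> * H' \<xi> \<le> (t\<^sup>2 / 4 * H' \<xi>) * H' \<xi>"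
    using assms(3) r by (simp add: power2_eq_square field_simps)
  then have "y' \<xi> \<le> t\<^sup>2 / 4 * H' \<xi>" using H by simp
  then show ?thesis using assms(4) by (simp add: algebra_simps)
qed

lemma emeasure_le_of_deriv_lower_bound:
  fixes f f' :: "real \<Rightarrow> real" and S :: "real set"
  assumes L: "L-lipschitz_on UNIV f"
    and deriv: "AE x in lebesgue. (f has_real_derivative f' x) (at x)"
    and mono: "AE x in lebesgue. 0 \<le> f' x"
    and lower: "AE x in lebesgue. x \<in> S \<longrightarrow> k \<le> f' x"
    and "0 < k" and le_M: "\<And>x. f x \<le> M"
    and lim_bot: "(f \<longlongrightarrow> 0) at_bot"
  shows "emeasure lebesgue S \<le> ennreal (M / k)"
proof (cases "S \<in> sets lebesgue")
  case False
  then show ?thesis by (simp add: emeasure_notin_sets)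
next
  case S: True
  \<comment> \<open>\<open>f'\<close> is nonnegative only a.e., but the passage to \<open>\<integral>\<^sup>+\<close> needs it everywhere\<close>
  define h where "h x = max 0 (f' x)" for x
  have h_int: "(h has_integral (f b - f a)) {a..b}" if "a \<le> b" for a b
  proof -
    from mono obtain N where N: "{x \<in> space lebesgue. \<not> 0 \<le> f' x} \<subseteq> N" "N \<in> null_sets lebesgue"
      by (auto elim!: AE_E simp: null_sets_def)
    then have "negligible N" by (simp add: negligible_iff_null_sets)
    then show ?thesis
      by (rule has_integral_spike[OF _ _ lipschitz_has_integral_derivative[OF L deriv that]])
        (use N(1) in \<open>force simp: h_def\<close>)
  qed
  define Sn where "Sn n = S \<inter> {- real n..real n}" for n
  have Sn_sets: "Sn n \<in> sets lebesgue" for n unfolding Sn_def using S by auto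
  have Sn_bound: "emeasure lebesgue (Sn n) \<le> ennreal ((M - f (- real n)) / k)" for n
  proof -
    have "ennreal k * emeasure lebesgue (Sn n) = (\<integral>\<^sup>+x. ennreal k * indicator (Sn n) x \<partial>lebesgue)"
      by (rule nn_integral_cmult_indicator[symmetric, OF Sn_sets])
    also have "\<dots> \<le> (\<integral>\<^sup>+x. ennreal (h x) * indicator {- real n..real n} x \<partial>lebesgue)"
      by (intro nn_integral_mono_AE eventually_mono[OF lower])
        (auto simp: Sn_def h_def indicator_def intro!: ennreal_leI)
    also have "\<dots> = (\<integral>\<^sup>+x. ennreal (h x) * indicator {- real n..real n} x \<partial>lborel)"
      by (simp add: nn_integral_completion)
    also have "\<dots> = ennreal (f (real n) - f (- real n))"
      by (rule nn_integral_has_integral_lebesgue'[OF _ h_int]) (auto simp: h_def)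
    also have "\<dots> \<le> ennreal (M - f (- real n))"
      using le_M by (intro ennreal_leI) (simp add: algebra_simps)
    finally have "ennreal k * emeasure lebesgue (Sn n) \<le> ennreal (M - f (- real n))" .
    then have "ennreal (1 / k) * (ennreal k * emeasure lebesgue (Sn n))
               \<le> ennreal (1 / k) * ennreal (M - f (- real n))"
      by (rule mult_left_mono) simp
    then show ?thesis
      using \<open>0 < k\<close> le_M[of "- real n"]
      by (simp add: mult.assoc[symmetric] ennreal_mult[symmetric] divide_inverse mult.commute)
  qed
  have "(\<lambda>n. emeasure lebesgue (Sn n)) \<longlonglongrightarrow> emeasure lebesgue (\<Union>n. Sn n)"
    by (rule Lim_emeasure_incseq) (use Sn_sets in \<open>auto simp: incseq_def Sn_def\<close>)
  moreover have "(\<Union>n. Sn n) = S"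
  proof (intro equalityI subsetI)
    fix x assume "x \<in> S"
    moreover obtain n :: nat where "\<bar>x\<bar> \<le> real n" using real_arch_simple by blast
    ultimately have "x \<in> Sn n" unfolding Sn_def by auto
    then show "x \<in> (\<Union>n. Sn n)" by blast
  qed (auto simp: Sn_def)
  moreover have "filterlim (\<lambda>n. - real n) at_bot sequentially"
    by (simp add: filterlim_uminus_at_bot filterlim_real_sequentially)
  then have "(\<lambda>n. ennreal ((M - f (- real n)) / k)) \<longlonglongrightarrow> ennreal ((M - 0) / k)"
    by (intro tendsto_ennrealI tendsto_divide tendsto_diff tendsto_const
        filterlim_compose[OF lim_bot]) (use \<open>0 < k\<close> in simp_all)
  ultimately show ?thesis
    using Sn_bound by (auto intro: LIMSEQ_le)
qed

theorem corollary2p4: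
  fixes \<alpha> y0 U0 H0 r0 y0' U0' H0' :: "real \<Rightarrow> real" and c t :: real
  assumes alpha_W: "bdd_fun \<alpha>" "\<exists>L. L-lipschitz_on UNIV \<alpha>"
    and alpha_range: "(\<forall>x. 0 \<le> \<alpha> x \<and> \<alpha> x < 1) \<or> (\<forall>x. \<alpha> x = 1)"
    and X0: "in_F_alpha \<alpha> y0 U0 H0 r0 H0 y0' U0' H0' H0'"
    and c_pos: "c > 0"
    and c_le: "AE \<xi> in lebesgue. c \<le> y0' \<xi> + H0' \<xi>"
    and t: "t \<ge> 0"
  shows "emeasure lebesgue {\<xi>. breaking_time y0' U0' H0' r0 \<xi> \<le> ereal t}
           \<le> ennreal ((1 + t\<^sup>2 / 4) / c * (SUP \<xi>. \<bar>H0 \<xi>\<bar>))"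
proof -
  have "bdd_fun H0" and "lip_with_deriv H0 H0'" and H0_lim: "(H0 \<longlongrightarrow> 0) at_bot"
    and nonneg: "AE x in lebesgue. y0' x \<ge> 0 \<and> H0' x \<ge> 0"
    and energy: "AE x in lebesgue. y0' x * H0' x = (U0' x)\<^sup>2 + (r0 x)\<^sup>2"
    using X0 unfolding in_F_alpha_def by blast+
  then obtain L B where L: "L-lipschitz_on UNIV H0"
    and deriv: "AE x in lebesgue. (H0 has_real_derivative H0' x) (at x)"
    and B: "\<And>x. \<bar>H0 x\<bar> \<le> B"
    unfolding lip_with_deriv_def bdd_fun_def by blast
  have H0_le: "H0 x \<le> (SUP \<xi>. \<bar>H0 \<xi>\<bar>)" for x
    using cSUP_upper[of x UNIV "\<lambda>\<xi>. \<bar>H0 \<xi>\<bar>"] B by (force intro: bdd_aboveI)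
  have k_pos: "0 < c / (1 + t\<^sup>2 / 4)"
    using c_pos by (simp add: add_pos_nonneg)
  have "AE \<xi> in lebesgue. breaking_time y0' U0' H0' r0 \<xi> \<le> ereal t
                          \<longrightarrow> c / (1 + t\<^sup>2 / 4) \<le> H0' \<xi>"
    using nonneg energy c_le
    by eventually_elim
      (auto simp: divide_le_eq add_pos_nonneg mult.commute
        dest: breaking_time_le_imp_deriv_lower_bound[OF _ _ _ _ t])
  from emeasure_le_of_deriv_lower_bound[OF L deriv _ _ k_pos H0_le H0_lim] this nonneg
  show ?thesis by (auto elim: eventually_mono simp: field_simps)
qed

end
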